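(* Let $q(z,\psi)$ be a joint probability density over $(z,\psi)$ with marginal $q(z)=\int q(z,\psi)\,d\psi$, fix $z$ with $q(z)>0$, and let $q(\psi\mid z)=q(z,\psi)/q(z)$. Let $\tau(\psi\mid z)$ be a probability density in $\psi$ such that for every $\psi$ with $\tau(\psi\mid z)=0$ we have $q(\psi,z)=0$. For $K\in\mathbb{N}_0$ define $$\mathcal{U}_K=\mathbb{E}_{q(\psi_0\mid z)}\,\mathbb{E}_{\tau(\psi_{1:K}\mid z)}\log\left(\frac{1}{K+1}\sum_{k=0}^{K}\frac{q(z,\psi_k)}{\tau(\psi_k\mid z)}\right),$$ where $\psi_0\sim q(\psi\mid z)$ and, independently, $\psi_1,\dots,\psi_K$ are i.i.d. from $\tau(\psi\mid z)$ (i.e. $\tau(\psi_{1:K}\mid z)=\prod_{k=1}^K\tau(\psi_k\mid z)$). Then: (1) $\mathcal{U}_K\ge\log q(z)$ for every $K\in\mathbb{N}_0$; (2) $\mathcal{U}_K\ge\mathcal{U}_{K+1}$ for every $K\in\mathbb{N}_0$; (3) $\lim_{K\to\infty}\mathcal{U}_K=\log q(z)$.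
   Context: All densities are with respect to a fixed base measure; $\log$ is the natural logarithm.
   Formalization: For every K the integrand of $\mathcal{U}_K$ is integrable with respect to $q(\psi_0\mid z)\,\tau(\psi_{1:K}\mid z)$, so each $\mathcal{U}_K$ is a finite expectation, and q(z) is finite. The statement above fails without it. *)

theory Defs
  imports "HOL-Probability.Probability"
begin

definition marg :: "'p measure \<Rightarrow> ('z \<Rightarrow> 'p \<Rightarrow> real) \<Rightarrow> 'z \<Rightarrow> real" where
  "marg M q z = (\<integral>\<psi>. q z \<psi> \<partial>M)"

definition cond :: "'p measure \<Rightarrow> ('z \<Rightarrow> 'p \<Rightarrow> real) \<Rightarrow> 'z \<Rightarrow> 'p \<Rightarrow> real" where
  "cond M q z \<psi> = q z \<psi> / marg M q z"

definition iw_log :: "('z \<Rightarrow> 'p \<Rightarrow> real) \<Rightarrow> ('p \<Rightarrow> real) \<Rightarrow> 'z \<Rightarrow> nat \<Rightarrow> 'p \<Rightarrow> (nat \<Rightarrow> 'p) \<Rightarrow> real" where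
  "iw_log q \<tau> z K \<psi>0 \<psi>s =
     ln ((1 / real (K + 1)) *
         (\<Sum>k\<in>{0..K}. (let \<psi> = (if k = 0 then \<psi>0 else \<psi>s k) in q z \<psi> / \<tau> \<psi>)))"

definition tau_prod :: "'p measure \<Rightarrow> ('p \<Rightarrow> real) \<Rightarrow> nat \<Rightarrow> (nat \<Rightarrow> 'p) measure" where
  "tau_prod M \<tau> K = PiM {1..K} (\<lambda>_. density M (\<lambda>\<psi>. ennreal (\<tau> \<psi>)))"

definition U :: "'p measure \<Rightarrow> ('z \<Rightarrow> 'p \<Rightarrow> real) \<Rightarrow> ('p \<Rightarrow> real) \<Rightarrow> 'z \<Rightarrow> nat \<Rightarrow> real" where
  "U M q \<tau> z K =
     (\<integral>\<psi>0. (\<integral>\<psi>s. iw_log q \<tau> z K \<psi>0 \<psi>s \<partial>(tau_prod M \<tau> K))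
        \<partial>(density M (\<lambda>\<psi>. ennreal (cond M q z \<psi>))))"

end

theory Submission
  imports Defs
begin

text \<open>
  Let \<open>w = q(z,\<cdot>)/\<tau>\<close> be the importance weight. Under \<open>\<tau>\<close> it has a law \<open>\<mu>\<close> on \<open>[0,\<infinity>)\<close> with
  mean \<open>m = q(z)\<close>; under \<open>q(\<cdot>|z)\<close> it has the size-biased law \<open>x/m d\<mu>\<close>. Writing \<open>S\<^sub>n\<close> for a
  sum of \<open>n\<close> independent copies of \<open>w\<close> under \<open>\<tau>\<close> and \<open>\<phi>(x) = x ln x\<close>, exchangeability of the
  summands gives \<open>E[X g(X + S\<^sub>K)] = E[S\<^sub>K\<^sub>+\<^sub>1 g(S\<^sub>K\<^sub>+\<^sub>1)]/(K+1)\<close>, hence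
  \<open>m U\<^sub>K = E \<phi>(S\<^sub>K\<^sub>+\<^sub>1/(K+1))\<close>.
  (1) is Jensen's inequality for the convex \<open>\<phi>\<close>. (2) follows by comparing \<open>\<phi>\<close> at the mean of
  \<open>K+1\<close> weights with its tangent at the mean of all \<open>K+2\<close>; the linear term vanishes by
  exchangeability. (3): concavity of \<open>ln\<close> in the \<open>K\<close> independent summands bounds
  \<open>m U\<^sub>K\<close> by \<open>E[X ln((X + K m)/(K+1))]\<close>, which tends to \<open>m ln m\<close> by dominated convergence
  (dominated thanks to the finiteness of \<open>E[X ln X]\<close>).
\<close>

lemma xlnx_ge_tangent:
  fixes a b :: real
  assumes "0 \<le> a" "0 \<le> b" "b = 0 \<Longrightarrow> a = 0"
  shows "b * ln b + (1 + ln b) * (a - b) \<le> a * ln a"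
proof (cases "a = 0 \<or> b = 0")
  case True
  then show ?thesis using assms by (auto simp: algebra_simps)
next
  case False
  then have a: "0 < a" and b: "0 < b" using assms by auto
  have "ln (b / a) \<le> b / a - 1" using a b by (intro ln_le_minus_one) simp
  then have "a * ln (b / a) \<le> a * (b / a - 1)" using a by (intro mult_left_mono) auto
  then have "a * (ln b - ln a) \<le> b - a" using a b by (simp add: ln_div algebra_simps)
  then show ?thesis by (simp add: algebra_simps)
qed

lemma ln_le_tangent:
  fixes y c :: real
  assumes "0 < y" "0 < c"
  shows "ln y \<le> ln c + (y - c) / c"
proof -
  have "ln (y / c) \<le> y / c - 1" using assms by (intro ln_le_minus_one) simp
  then show ?thesis using assms by (simp add: ln_div diff_divide_distrib)
qed

lemma abs_ln_between_le:
  fixes x m c :: real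
  assumes "0 < x" "0 < m" "min x m \<le> c" "c \<le> max x m"
  shows "\<bar>ln c\<bar> \<le> \<bar>ln x\<bar> + \<bar>ln m\<bar>"
proof -
  have c: "0 < c" using assms by (auto simp: min_def split: if_splits)
  have "ln (min x m) \<le> ln c" using assms c by (subst ln_le_cancel_iff) (auto simp: min_def)
  moreover have "ln c \<le> ln (max x m)" using assms c by (subst ln_le_cancel_iff) (auto simp: max_def)
  ultimately show ?thesis by (auto simp: min_def max_def split: if_splits)
qed

lemma abs_times_centered_le:
  fixes x s c :: real
  assumes "0 \<le> x" "0 \<le> c"
  shows "\<bar>x * ((s - c) / (x + c))\<bar> \<le> \<bar>s\<bar> + c"
proof -
  have r: "\<bar>x / (x + c)\<bar> \<le> 1"
    using assms by (cases "x + c = 0") (auto simp: divide_le_eq_1 abs_le_iff)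
  have "\<bar>x * ((s - c) / (x + c))\<bar> = \<bar>x / (x + c)\<bar> * \<bar>s - c\<bar>"
    by (simp add: abs_mult)
  also have "\<dots> \<le> 1 * \<bar>s - c\<bar>"
    by (rule mult_right_mono[OF r]) simp
  also have "\<dots> \<le> \<bar>s\<bar> + c"
    using abs_triangle_ineq4[of s c] assms by simp
  finally show ?thesis .
qed

lemma (in prob_space) integral_pair_fst:
  fixes f :: "'b \<Rightarrow> real"
  assumes [measurable]: "f \<in> borel_measurable N"
  shows integrable_pair_fst_iff: "integrable (N \<Otimes>\<^sub>M M) (\<lambda>p. f (fst p)) \<longleftrightarrow> integrable N f"
    and "(\<integral>p. f (fst p) \<partial>(N \<Otimes>\<^sub>M M)) = (\<integral>x. f x \<partial>N)"
  using integrable_distr_eq[of fst "N \<Otimes>\<^sub>M M" N f] integral_distr[of fst "N \<Otimes>\<^sub>M M" N f]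
  by (simp_all add: distr_pair_fst)

lemma distr_pair_snd:
  assumes "prob_space N" "sigma_finite_measure M"
  shows "distr (N \<Otimes>\<^sub>M M) M snd = M"
proof (intro measure_eqI)
  interpret N: prob_space N by fact
  interpret M: sigma_finite_measure M by fact
  fix B assume "B \<in> sets (distr (N \<Otimes>\<^sub>M M) M snd)"
  then have B: "B \<in> sets M" by simp
  then have "emeasure (distr (N \<Otimes>\<^sub>M M) M snd) B = emeasure (N \<Otimes>\<^sub>M M) (space N \<times> B)"
    by (auto simp: emeasure_distr space_pair_measure dest: sets.sets_into_space
        intro!: arg_cong2[where f=emeasure])
  with B show "emeasure (distr (N \<Otimes>\<^sub>M M) M snd) B = emeasure M B"
    by (simp add: M.emeasure_pair_measure_Times N.emeasure_space_1)
qed simp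

lemma integral_pair_snd:
  fixes f :: "'b \<Rightarrow> real"
  assumes "prob_space N" "sigma_finite_measure M" and [measurable]: "f \<in> borel_measurable M"
  shows integrable_pair_snd_iff: "integrable (N \<Otimes>\<^sub>M M) (\<lambda>p. f (snd p)) \<longleftrightarrow> integrable M f"
    and "(\<integral>p. f (snd p) \<partial>(N \<Otimes>\<^sub>M M)) = (\<integral>x. f x \<partial>M)"
  using integrable_distr_eq[of snd "N \<Otimes>\<^sub>M M" M f] integral_distr[of snd "N \<Otimes>\<^sub>M M" M f]
  by (simp_all add: distr_pair_snd assms)

lemma weighted_integral_transfer:
  fixes Fa Ga :: "'a \<Rightarrow> real" and Fb Gb :: "'b \<Rightarrow> real" and g :: "real \<Rightarrow> real"
  assumes [measurable]: "Fa \<in> borel_measurable Ma" "Ga \<in> borel_measurable Ma"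
    "Fb \<in> borel_measurable Mb" "Gb \<in> borel_measurable Mb" "g \<in> borel_measurable borel"
  and Fa_nonneg: "AE \<omega> in Ma. 0 \<le> Fa \<omega>" and Fb_nonneg: "AE \<omega> in Mb. 0 \<le> Fb \<omega>" and c: "0 \<le> c"
  and eq: "\<And>h. h \<in> borel_measurable borel \<Longrightarrow>
     (\<integral>\<^sup>+\<omega>. ennreal (Fa \<omega>) * h (Ga \<omega>) \<partial>Ma) = ennreal c * (\<integral>\<^sup>+\<omega>. ennreal (Fb \<omega>) * h (Gb \<omega>) \<partial>Mb)"
  and int: "integrable Mb (\<lambda>\<omega>. Fb \<omega> * g (Gb \<omega>))"
  shows "integrable Ma (\<lambda>\<omega>. Fa \<omega> * g (Ga \<omega>))"
    and "(\<integral>\<omega>. Fa \<omega> * g (Ga \<omega>) \<partial>Ma) = c * (\<integral>\<omega>. Fb \<omega> * g (Gb \<omega>) \<partial>Mb)"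
proof -
  have nn_transfer: "(\<integral>\<^sup>+\<omega>. ennreal (Fa \<omega> * k (Ga \<omega>)) \<partial>Ma) = ennreal c * (\<integral>\<^sup>+\<omega>. ennreal (Fb \<omega> * k (Gb \<omega>)) \<partial>Mb)"
    if [measurable]: "k \<in> borel_measurable borel" for k :: "real \<Rightarrow> real"
  proof -
    have "(\<integral>\<^sup>+\<omega>. ennreal (Fa \<omega> * k (Ga \<omega>)) \<partial>Ma) = (\<integral>\<^sup>+\<omega>. ennreal (Fa \<omega>) * ennreal (k (Ga \<omega>)) \<partial>Ma)"
      by (rule nn_integral_cong_AE) (use Fa_nonneg in \<open>auto simp: ennreal_mult' elim: eventually_mono\<close>)
    also have "\<dots> = ennreal c * (\<integral>\<^sup>+\<omega>. ennreal (Fb \<omega>) * ennreal (k (Gb \<omega>)) \<partial>Mb)"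
      by (rule eq) measurable
    also have "(\<integral>\<^sup>+\<omega>. ennreal (Fb \<omega>) * ennreal (k (Gb \<omega>)) \<partial>Mb) = (\<integral>\<^sup>+\<omega>. ennreal (Fb \<omega> * k (Gb \<omega>)) \<partial>Mb)"
      by (rule nn_integral_cong_AE) (use Fb_nonneg in \<open>auto simp: ennreal_mult' elim: eventually_mono\<close>)
    finally show ?thesis .
  qed
  have "(\<integral>\<^sup>+\<omega>. ennreal (norm (Fa \<omega> * g (Ga \<omega>))) \<partial>Ma) = (\<integral>\<^sup>+\<omega>. ennreal (Fa \<omega> * \<bar>g (Ga \<omega>)\<bar>) \<partial>Ma)"
    by (rule nn_integral_cong_AE) (use Fa_nonneg in \<open>auto simp: abs_mult elim: eventually_mono\<close>)
  also have "\<dots> = ennreal c * (\<integral>\<^sup>+\<omega>. ennreal (Fb \<omega> * \<bar>g (Gb \<omega>)\<bar>) \<partial>Mb)"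
    by (rule nn_transfer) measurable
  also have "(\<integral>\<^sup>+\<omega>. ennreal (Fb \<omega> * \<bar>g (Gb \<omega>)\<bar>) \<partial>Mb) = (\<integral>\<^sup>+\<omega>. ennreal (norm (Fb \<omega> * g (Gb \<omega>))) \<partial>Mb)"
    by (rule nn_integral_cong_AE) (use Fb_nonneg in \<open>auto simp: abs_mult elim: eventually_mono\<close>)
  finally have "(\<integral>\<^sup>+\<omega>. ennreal (norm (Fa \<omega> * g (Ga \<omega>))) \<partial>Ma) < \<infinity>"
    using int unfolding integrable_iff_bounded by (simp add: ennreal_mult_less_top)
  then show int_a: "integrable Ma (\<lambda>\<omega>. Fa \<omega> * g (Ga \<omega>))"
    unfolding integrable_iff_bounded by simp
  have neg_transfer: "(\<integral>\<^sup>+\<omega>. ennreal (- (Fa \<omega> * g (Ga \<omega>))) \<partial>Ma) = ennreal c * (\<integral>\<^sup>+\<omega>. ennreal (- (Fb \<omega> * g (Gb \<omega>))) \<partial>Mb)"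
    using nn_transfer[of "\<lambda>t. - g t"] by simp
  show "(\<integral>\<omega>. Fa \<omega> * g (Ga \<omega>) \<partial>Ma) = c * (\<integral>\<omega>. Fb \<omega> * g (Gb \<omega>) \<partial>Mb)"
    unfolding real_lebesgue_integral_def[OF int_a] real_lebesgue_integral_def[OF int]
    by (simp add: nn_transfer neg_transfer enn2real_mult c right_diff_distrib)
qed

section \<open>Sums of independent importance weights\<close>

text \<open>
  \<open>P\<close> is the proposal \<open>\<tau>(\<cdot>|z)\<close>, \<open>w\<close> the importance weight and \<open>m = q(z)\<close>; \<open>\<mu>\<close> is the law of
  \<open>w\<close> under \<open>P\<close> and \<open>\<nu> K\<close> the law of the sum of \<open>K\<close> independent copies of it.
\<close>

locale importance_weights =
  fixes P :: "'p measure" and w :: "'p \<Rightarrow> real" and m :: real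
  assumes prob_space_P: "prob_space P"
    and measurable_w[measurable]: "w \<in> borel_measurable P"
    and w_nonneg: "\<And>\<psi>. \<psi> \<in> space P \<Longrightarrow> 0 \<le> w \<psi>"
    and nn_integral_w: "(\<integral>\<^sup>+\<psi>. ennreal (w \<psi>) \<partial>P) = ennreal m"
    and m_pos: "0 < m"
    and integrable_w_ln_w: "integrable P (\<lambda>\<psi>. w \<psi> * ln (w \<psi>))"
begin

definition \<mu> :: "real measure" where
  "\<mu> = distr P borel w"

definition weight_sum :: "nat \<Rightarrow> (nat \<Rightarrow> 'p) \<Rightarrow> real" where
  "weight_sum K \<psi>s = (\<Sum>k\<in>{1..K}. w (\<psi>s k))"

definition \<nu> :: "nat \<Rightarrow> real measure" where
  "\<nu> K = distr (PiM {1..K} (\<lambda>_. P)) borel (weight_sum K)"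

lemma measurable_weight_sum[measurable]:
  "weight_sum K \<in> borel_measurable (PiM {1..K} (\<lambda>_. P))"
  unfolding weight_sum_def by measurable

lemma sets_\<mu>[measurable_cong]: "sets \<mu> = sets borel"
  by (simp add: \<mu>_def)

lemma sets_\<nu>[measurable_cong]: "sets (\<nu> K) = sets borel"
  by (simp add: \<nu>_def)

lemma prob_space_\<mu>: "prob_space \<mu>"
  unfolding \<mu>_def by (rule prob_space.prob_space_distr[OF prob_space_P]) simp

lemma prob_space_\<nu>: "prob_space (\<nu> K)"
  unfolding \<nu>_def
  by (intro prob_space.prob_space_distr[OF prob_space_PiM] measurable_weight_sum prob_space_P)

lemma sigma_finite_\<nu>: "sigma_finite_measure (\<nu> K)"
  by (rule prob_space_imp_sigma_finite[OF prob_space_\<nu>])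

lemma AE_\<mu>_nonneg: "AE x in \<mu>. 0 \<le> x"
  unfolding \<mu>_def by (subst AE_distr_iff) (auto intro!: AE_I2 w_nonneg)

lemma AE_\<nu>_nonneg: "AE s in \<nu> K. 0 \<le> s"
  unfolding \<nu>_def
  by (subst AE_distr_iff[OF measurable_weight_sum])
    (auto simp: space_PiM weight_sum_def PiE_def Pi_def intro!: AE_I2 sum_nonneg w_nonneg)

lemma AE_\<nu>_0: "AE s in \<nu> 0. s = 0"
  unfolding \<nu>_def
  by (subst AE_distr_iff[OF measurable_weight_sum]) (auto simp: weight_sum_def intro!: AE_I2)

lemma nn_integral_\<mu>_id: "(\<integral>\<^sup>+x. ennreal x \<partial>\<mu>) = ennreal m"
  unfolding \<mu>_def by (subst nn_integral_distr) (auto simp: nn_integral_w)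

lemma integrable_\<mu>_xlnx: "integrable \<mu> (\<lambda>x. x * ln x)"
  unfolding \<mu>_def by (subst integrable_distr_eq) (auto simp: integrable_w_ln_w)

lemma sigma_finite_\<mu>: "sigma_finite_measure \<mu>"
  by (rule prob_space_imp_sigma_finite[OF prob_space_\<mu>])

lemma pair_sigma_finite_\<mu>_\<nu>: "pair_sigma_finite \<mu> (\<nu> K)"
  by (intro pair_sigma_finite.intro sigma_finite_\<mu> sigma_finite_\<nu>)

lemma AE_pair_nonneg: "AE p in \<mu> \<Otimes>\<^sub>M \<nu> K. 0 \<le> fst p \<and> 0 \<le> snd p"
proof (rule pair_sigma_finite.AE_pair_measure[OF pair_sigma_finite_\<mu>_\<nu>])
  show "{x \<in> space (\<mu> \<Otimes>\<^sub>M \<nu> K). 0 \<le> fst x \<and> 0 \<le> snd x} \<in> sets (\<mu> \<Otimes>\<^sub>M \<nu> K)"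
    by measurable
  show "AE x in \<mu>. AE y in \<nu> K. 0 \<le> fst (x, y) \<and> 0 \<le> snd (x, y)"
    using AE_\<mu>_nonneg by eventually_elim (use AE_\<nu>_nonneg[of K] in auto)
qed

lemma integrable_\<mu>_id: "integrable \<mu> (\<lambda>x. x)"
  by (rule integrableI_nonneg) (use AE_\<mu>_nonneg nn_integral_\<mu>_id in auto)

lemma integral_\<mu>_id: "(\<integral>x. x \<partial>\<mu>) = m"
  by (subst integral_eq_nn_integral) (use AE_\<mu>_nonneg nn_integral_\<mu>_id m_pos in auto)

lemma weight_sum_Suc: "weight_sum (Suc K) (\<psi>s(Suc K := y)) = w y + weight_sum K \<psi>s"
proof -
  have "weight_sum (Suc K) (\<psi>s(Suc K := y)) = w y + (\<Sum>k\<in>{1..K}. w ((\<psi>s(Suc K := y)) k))"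
    unfolding weight_sum_def by (subst atLeastAtMostSuc_conv) auto
  also have "(\<Sum>k\<in>{1..K}. w ((\<psi>s(Suc K := y)) k)) = weight_sum K \<psi>s"
    unfolding weight_sum_def by (intro sum.cong) auto
  finally show ?thesis .
qed

lemma nn_integral_\<nu>_Suc:
  assumes [measurable]: "f \<in> borel_measurable borel"
  shows "(\<integral>\<^sup>+t. f t \<partial>\<nu> (Suc K)) = (\<integral>\<^sup>+x. \<integral>\<^sup>+s. f (x + s) \<partial>\<nu> K \<partial>\<mu>)"
proof -
  interpret product_sigma_finite "\<lambda>_. P"
    by (simp add: product_sigma_finite_def prob_space_imp_sigma_finite prob_space_P)
  interpret \<nu>: sigma_finite_measure "\<nu> K" by (rule sigma_finite_\<nu>)
  have ins: "{1..Suc K} = insert (Suc K) {1..K}" by (rule atLeastAtMostSuc_conv) simp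
  have "(\<integral>\<^sup>+t. f t \<partial>\<nu> (Suc K)) = (\<integral>\<^sup>+\<psi>s. f (weight_sum (Suc K) \<psi>s) \<partial>PiM (insert (Suc K) {1..K}) (\<lambda>_. P))"
    unfolding \<nu>_def ins[symmetric] by (rule nn_integral_distr) measurable
  also have "\<dots> = (\<integral>\<^sup>+y. \<integral>\<^sup>+\<psi>s. f (weight_sum (Suc K) (\<psi>s(Suc K := y))) \<partial>PiM {1..K} (\<lambda>_. P) \<partial>P)"
    using measurable_weight_sum[of "Suc K"] unfolding ins
    by (intro product_nn_integral_insert_rev) auto
  also have "\<dots> = (\<integral>\<^sup>+y. \<integral>\<^sup>+s. f (w y + s) \<partial>\<nu> K \<partial>P)"
    unfolding weight_sum_Suc \<nu>_def by (intro nn_integral_cong nn_integral_distr[symmetric]) measurable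
  also have "\<dots> = (\<integral>\<^sup>+x. \<integral>\<^sup>+s. f (x + s) \<partial>\<nu> K \<partial>\<mu>)"
    unfolding \<mu>_def by (rule nn_integral_distr[symmetric]) measurable
  finally show ?thesis .
qed

lemma \<nu>_Suc: "\<nu> (Suc K) = distr (\<mu> \<Otimes>\<^sub>M \<nu> K) borel (\<lambda>(x, s). x + s)"
proof (rule measure_eqI)
  interpret \<nu>: sigma_finite_measure "\<nu> K" by (rule sigma_finite_\<nu>)
  fix A assume "A \<in> sets (\<nu> (Suc K))"
  then have [measurable]: "A \<in> sets borel" by (simp add: sets_\<nu>)
  have "emeasure (\<nu> (Suc K)) A = (\<integral>\<^sup>+t. indicator A t \<partial>\<nu> (Suc K))"
    by (simp add: sets_\<nu>)
  also have "\<dots> = (\<integral>\<^sup>+x. \<integral>\<^sup>+s. indicator A (x + s) \<partial>\<nu> K \<partial>\<mu>)"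
    by (rule nn_integral_\<nu>_Suc) simp
  also have "\<dots> = (\<integral>\<^sup>+p. indicator A (fst p + snd p) \<partial>(\<mu> \<Otimes>\<^sub>M \<nu> K))"
    by (subst \<nu>.nn_integral_fst[symmetric]) auto
  also have "\<dots> = (\<integral>\<^sup>+t. indicator A t \<partial>distr (\<mu> \<Otimes>\<^sub>M \<nu> K) borel (\<lambda>(x, s). x + s))"
    by (subst nn_integral_distr) (auto simp: case_prod_beta')
  also have "\<dots> = emeasure (distr (\<mu> \<Otimes>\<^sub>M \<nu> K) borel (\<lambda>(x, s). x + s)) A"
    by (intro nn_integral_indicator) simp
  finally show "emeasure (\<nu> (Suc K)) A = emeasure (distr (\<mu> \<Otimes>\<^sub>M \<nu> K) borel (\<lambda>(x, s). x + s)) A" .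
qed (simp add: sets_\<nu>)

lemma nn_integral_\<nu>_0:
  assumes [measurable]: "f \<in> borel_measurable borel"
  shows "(\<integral>\<^sup>+t. f t \<partial>\<nu> 0) = f 0"
proof -
  interpret prob_space "\<nu> 0" by (rule prob_space_\<nu>)
  have "(\<integral>\<^sup>+t. f t \<partial>\<nu> 0) = (\<integral>\<^sup>+t. f 0 \<partial>\<nu> 0)"
    by (rule nn_integral_cong_AE) (use AE_\<nu>_0 in auto)
  then show ?thesis by (simp add: emeasure_space_1)
qed

lemma nn_integral_\<nu>_Suc_fst_times:
  assumes [measurable]: "h \<in> borel_measurable borel"
  shows "(\<integral>\<^sup>+x. \<integral>\<^sup>+t. ennreal x * h (x + t) \<partial>\<nu> (Suc K) \<partial>\<mu>)
      = (\<integral>\<^sup>+x. \<integral>\<^sup>+y. \<integral>\<^sup>+s. ennreal y * h (x + (y + s)) \<partial>\<nu> K \<partial>\<mu> \<partial>\<mu>)"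
proof -
  interpret \<nu>: sigma_finite_measure "\<nu> K" by (rule sigma_finite_\<nu>)
  interpret \<mu>\<mu>: pair_sigma_finite \<mu> \<mu> by (intro pair_sigma_finite.intro sigma_finite_\<mu>)
  have "(\<lambda>p. \<integral>\<^sup>+s. ennreal (fst p) * h (fst p + (snd p + s)) \<partial>\<nu> K) \<in> borel_measurable (\<mu> \<Otimes>\<^sub>M \<mu>)"
    using \<nu>.borel_measurable_nn_integral_fst[of "\<lambda>(p, s). ennreal (fst p) * h (fst p + (snd p + s))" "\<mu> \<Otimes>\<^sub>M \<mu>"]
    by (simp add: case_prod_beta')
  then have "(\<integral>\<^sup>+x. \<integral>\<^sup>+y. \<integral>\<^sup>+s. ennreal x * h (x + (y + s)) \<partial>\<nu> K \<partial>\<mu> \<partial>\<mu>)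
      = (\<integral>\<^sup>+y. \<integral>\<^sup>+x. \<integral>\<^sup>+s. ennreal x * h (x + (y + s)) \<partial>\<nu> K \<partial>\<mu> \<partial>\<mu>)"
    by (intro \<mu>\<mu>.Fubini'[symmetric]) (simp add: case_prod_beta')
  then show ?thesis
    by (subst nn_integral_\<nu>_Suc) (simp_all add: ac_simps)
qed

lemma nn_integral_\<nu>_Suc_snd_times:
  assumes [measurable]: "h \<in> borel_measurable borel"
  shows "(\<integral>\<^sup>+x. \<integral>\<^sup>+t. ennreal t * h (x + t) \<partial>\<nu> (Suc K) \<partial>\<mu>)
      = (\<integral>\<^sup>+x. \<integral>\<^sup>+y. \<integral>\<^sup>+s. ennreal y * h (x + (y + s)) \<partial>\<nu> K \<partial>\<mu> \<partial>\<mu>)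
      + (\<integral>\<^sup>+x. \<integral>\<^sup>+y. \<integral>\<^sup>+s. ennreal s * h (x + (y + s)) \<partial>\<nu> K \<partial>\<mu> \<partial>\<mu>)"
proof -
  interpret \<nu>: sigma_finite_measure "\<nu> K" by (rule sigma_finite_\<nu>)
  interpret \<mu>: sigma_finite_measure \<mu> by (rule sigma_finite_\<mu>)
  have split: "(\<integral>\<^sup>+s. ennreal (y + s) * h (x + (y + s)) \<partial>\<nu> K)
      = (\<integral>\<^sup>+s. ennreal y * h (x + (y + s)) \<partial>\<nu> K) + (\<integral>\<^sup>+s. ennreal s * h (x + (y + s)) \<partial>\<nu> K)"
    if "0 \<le> y" for x y
  proof -
    have "(\<integral>\<^sup>+s. ennreal (y + s) * h (x + (y + s)) \<partial>\<nu> K)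
        = (\<integral>\<^sup>+s. ennreal y * h (x + (y + s)) + ennreal s * h (x + (y + s)) \<partial>\<nu> K)"
      by (rule nn_integral_cong_AE)
        (use AE_\<nu>_nonneg[of K] that in \<open>auto simp: ennreal_plus distrib_right elim: eventually_mono\<close>)
    then show ?thesis by (simp add: nn_integral_add)
  qed
  have "(\<integral>\<^sup>+x. \<integral>\<^sup>+t. ennreal t * h (x + t) \<partial>\<nu> (Suc K) \<partial>\<mu>)
      = (\<integral>\<^sup>+x. \<integral>\<^sup>+y. \<integral>\<^sup>+s. ennreal (y + s) * h (x + (y + s)) \<partial>\<nu> K \<partial>\<mu> \<partial>\<mu>)"
    by (rule nn_integral_cong, subst nn_integral_\<nu>_Suc) auto
  also have "\<dots> = (\<integral>\<^sup>+x. \<integral>\<^sup>+y. (\<integral>\<^sup>+s. ennreal y * h (x + (y + s)) \<partial>\<nu> K)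
      + (\<integral>\<^sup>+s. ennreal s * h (x + (y + s)) \<partial>\<nu> K) \<partial>\<mu> \<partial>\<mu>)"
    by (intro nn_integral_cong nn_integral_cong_AE)
      (use AE_\<mu>_nonneg in \<open>auto simp: split elim!: eventually_mono\<close>)
  finally show ?thesis by (simp add: nn_integral_add)
qed

text \<open>Exchangeability: each of the \<open>K\<close> summands of \<open>s\<close> contributes as much as \<open>x\<close>.\<close>

lemma nn_integral_sum_times_exchange:
  assumes "h \<in> borel_measurable borel"
  shows "(\<integral>\<^sup>+x. \<integral>\<^sup>+s. ennreal s * h (x + s) \<partial>\<nu> K \<partial>\<mu>)
      = of_nat K * (\<integral>\<^sup>+x. \<integral>\<^sup>+s. ennreal x * h (x + s) \<partial>\<nu> K \<partial>\<mu>)"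
  using assms
proof (induction K arbitrary: h)
  case 0
  note [measurable] = 0
  show ?case by (simp add: nn_integral_\<nu>_0)
next
  case (Suc K)
  note [measurable] = Suc.prems
  interpret \<nu>: sigma_finite_measure "\<nu> K" by (rule sigma_finite_\<nu>)
  interpret \<mu>: sigma_finite_measure \<mu> by (rule sigma_finite_\<mu>)
  have IH: "(\<integral>\<^sup>+y. \<integral>\<^sup>+s. ennreal s * h (x + (y + s)) \<partial>\<nu> K \<partial>\<mu>)
      = of_nat K * (\<integral>\<^sup>+y. \<integral>\<^sup>+s. ennreal y * h (x + (y + s)) \<partial>\<nu> K \<partial>\<mu>)" for x
    using Suc.IH[of "\<lambda>t. h (x + t)"] by simp
  show ?case
    unfolding nn_integral_\<nu>_Suc_snd_times[OF Suc.prems] nn_integral_\<nu>_Suc_fst_times[OF Suc.prems] IH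
    by (simp add: nn_integral_cmult distrib_right)
qed

lemma nn_integral_pair_snd_times:
  assumes [measurable]: "h \<in> borel_measurable borel"
  shows "(\<integral>\<^sup>+p. ennreal (snd p) * h (fst p + snd p) \<partial>(\<mu> \<Otimes>\<^sub>M \<nu> K))
      = ennreal (real K) * (\<integral>\<^sup>+p. ennreal (fst p) * h (fst p + snd p) \<partial>(\<mu> \<Otimes>\<^sub>M \<nu> K))"
proof -
  interpret \<nu>: sigma_finite_measure "\<nu> K" by (rule sigma_finite_\<nu>)
  show ?thesis
    using nn_integral_sum_times_exchange[OF assms, of K]
    by (subst (1 2) \<nu>.nn_integral_fst[symmetric]) (auto simp: ennreal_of_nat_eq_real_of_nat)
qed

lemma nn_integral_\<nu>_Suc_times:
  assumes [measurable]: "h \<in> borel_measurable borel"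
  shows "(\<integral>\<^sup>+t. ennreal t * h t \<partial>\<nu> (Suc K))
      = ennreal (real (Suc K)) * (\<integral>\<^sup>+p. ennreal (fst p) * h (fst p + snd p) \<partial>(\<mu> \<Otimes>\<^sub>M \<nu> K))"
proof -
  interpret \<nu>: sigma_finite_measure "\<nu> K" by (rule sigma_finite_\<nu>)
  have "(\<integral>\<^sup>+t. ennreal t * h t \<partial>\<nu> (Suc K)) = (\<integral>\<^sup>+x. \<integral>\<^sup>+s. ennreal (x + s) * h (x + s) \<partial>\<nu> K \<partial>\<mu>)"
    by (subst nn_integral_\<nu>_Suc) auto
  also have "\<dots> = (\<integral>\<^sup>+p. ennreal (fst p + snd p) * h (fst p + snd p) \<partial>(\<mu> \<Otimes>\<^sub>M \<nu> K))"
    by (subst \<nu>.nn_integral_fst[symmetric]) auto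
  also have "\<dots> = (\<integral>\<^sup>+p. ennreal (fst p) * h (fst p + snd p) + ennreal (snd p) * h (fst p + snd p)
      \<partial>(\<mu> \<Otimes>\<^sub>M \<nu> K))"
    by (rule nn_integral_cong_AE)
      (use AE_pair_nonneg[of K] in \<open>auto simp: ennreal_plus distrib_right elim: eventually_mono\<close>)
  also have "\<dots> = ennreal (real (Suc K)) * (\<integral>\<^sup>+p. ennreal (fst p) * h (fst p + snd p) \<partial>(\<mu> \<Otimes>\<^sub>M \<nu> K))"
    by (simp add: nn_integral_add nn_integral_pair_snd_times ennreal_of_nat_eq_real_of_nat distrib_right)
  finally show ?thesis .
qed

lemma integral_pair_snd_times:
  assumes [measurable]: "g \<in> borel_measurable borel"
    and int: "integrable (\<mu> \<Otimes>\<^sub>M \<nu> K) (\<lambda>p. fst p * g (fst p + snd p))"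
  shows "integrable (\<mu> \<Otimes>\<^sub>M \<nu> K) (\<lambda>p. snd p * g (fst p + snd p))"
    and "(\<integral>p. snd p * g (fst p + snd p) \<partial>(\<mu> \<Otimes>\<^sub>M \<nu> K))
      = real K * (\<integral>p. fst p * g (fst p + snd p) \<partial>(\<mu> \<Otimes>\<^sub>M \<nu> K))"
proof -
  have "AE p in \<mu> \<Otimes>\<^sub>M \<nu> K. 0 \<le> snd p" "AE p in \<mu> \<Otimes>\<^sub>M \<nu> K. 0 \<le> fst p"
    using AE_pair_nonneg[of K] by (auto elim: eventually_mono)
  note transfer = weighted_integral_transfer[where Fa=snd and Ga="\<lambda>p. fst p + snd p" and Fb=fst
      and Gb="\<lambda>p. fst p + snd p" and Ma="\<mu> \<Otimes>\<^sub>M \<nu> K" and Mb="\<mu> \<Otimes>\<^sub>M \<nu> K" and c="real K" and g=g,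
      OF _ _ _ _ _ this _ nn_integral_pair_snd_times int]
  show "integrable (\<mu> \<Otimes>\<^sub>M \<nu> K) (\<lambda>p. snd p * g (fst p + snd p))"
    by (rule transfer(1)) auto
  show "(\<integral>p. snd p * g (fst p + snd p) \<partial>(\<mu> \<Otimes>\<^sub>M \<nu> K))
      = real K * (\<integral>p. fst p * g (fst p + snd p) \<partial>(\<mu> \<Otimes>\<^sub>M \<nu> K))"
    by (rule transfer(2)) auto
qed

lemma integral_\<nu>_Suc_times:
  assumes [measurable]: "g \<in> borel_measurable borel"
    and int: "integrable (\<mu> \<Otimes>\<^sub>M \<nu> K) (\<lambda>p. fst p * g (fst p + snd p))"
  shows "integrable (\<nu> (Suc K)) (\<lambda>t. t * g t)"
    and "(\<integral>t. t * g t \<partial>\<nu> (Suc K)) = real (Suc K) * (\<integral>p. fst p * g (fst p + snd p) \<partial>(\<mu> \<Otimes>\<^sub>M \<nu> K))"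
proof -
  have "AE p in \<mu> \<Otimes>\<^sub>M \<nu> K. 0 \<le> fst p"
    using AE_pair_nonneg[of K] by (auto elim: eventually_mono)
  note transfer = weighted_integral_transfer[where Fa="\<lambda>t. t" and Ga="\<lambda>t. t" and Fb=fst
      and Gb="\<lambda>p. fst p + snd p" and Ma="\<nu> (Suc K)" and Mb="\<mu> \<Otimes>\<^sub>M \<nu> K" and c="real (Suc K)" and g=g,
      OF _ _ _ _ _ AE_\<nu>_nonneg this _ nn_integral_\<nu>_Suc_times int]
  show "integrable (\<nu> (Suc K)) (\<lambda>t. t * g t)"
    by (rule transfer(1)) auto
  show "(\<integral>t. t * g t \<partial>\<nu> (Suc K)) = real (Suc K) * (\<integral>p. fst p * g (fst p + snd p) \<partial>(\<mu> \<Otimes>\<^sub>M \<nu> K))"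
    by (rule transfer(2)) auto
qed

lemma integrable_\<nu>_id: "integrable (\<nu> K) (\<lambda>s. s)"
  and integral_\<nu>_id: "(\<integral>s. s \<partial>\<nu> K) = real K * m"
proof -
  have "integrable (\<nu> K) (\<lambda>s. s) \<and> (\<integral>s. s \<partial>\<nu> K) = real K * m"
  proof (cases K)
    case 0
    have ae: "AE s in \<nu> 0. 0 = s" using AE_\<nu>_0 by eventually_elim simp
    have "integrable (\<nu> 0) (\<lambda>s. s)"
      by (rule integrable_cong_AE_imp[of _ "\<lambda>_. 0"]) (simp, measurable, rule ae)
    moreover have "(\<integral>s. s \<partial>\<nu> 0) = (\<integral>s. 0 \<partial>\<nu> 0)"
      by (rule integral_cong_AE) (measurable, rule AE_\<nu>_0)
    ultimately show ?thesis using 0 by simp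
  next
    case (Suc K')
    have mean_fst: "integrable (\<mu> \<Otimes>\<^sub>M \<nu> K') (\<lambda>p. fst p)" "(\<integral>p. fst p \<partial>(\<mu> \<Otimes>\<^sub>M \<nu> K')) = m"
      using prob_space.integral_pair_fst[OF prob_space_\<nu>, of "\<lambda>x. x" \<mu> K']
      by (simp_all add: integrable_\<mu>_id integral_\<mu>_id)
    then have int: "integrable (\<mu> \<Otimes>\<^sub>M \<nu> K') (\<lambda>p. fst p * (\<lambda>_. 1) (fst p + snd p))"
      by simp
    have "integrable (\<nu> (Suc K')) (\<lambda>t. t * (\<lambda>_. 1::real) t)"
      by (rule integral_\<nu>_Suc_times(1)[OF _ int]) simp
    moreover have "(\<integral>t. t * (\<lambda>_. 1::real) t \<partial>\<nu> (Suc K'))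
        = real (Suc K') * (\<integral>p. fst p * (\<lambda>_. 1) (fst p + snd p) \<partial>(\<mu> \<Otimes>\<^sub>M \<nu> K'))"
      by (rule integral_\<nu>_Suc_times(2)[OF _ int]) simp
    ultimately show ?thesis using mean_fst(2) Suc by simp
  qed
  then show "integrable (\<nu> K) (\<lambda>s. s)" "(\<integral>s. s \<partial>\<nu> K) = real K * m" by auto
qed

section \<open>The expected logarithm of the average weight\<close>

text \<open>\<open>size_biased\<close> is the law of \<open>w\<close> under \<open>q(\<cdot>|z)\<close>.\<close>

definition size_biased :: "real measure" where
  "size_biased = density \<mu> (\<lambda>x. ennreal (x / m))"

lemma prob_space_size_biased: "prob_space size_biased"
proof (rule prob_spaceI)
  have "(\<integral>\<^sup>+x. ennreal (x / m) \<partial>\<mu>) = (\<integral>\<^sup>+x. ennreal x * ennreal (1 / m) \<partial>\<mu>)"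
    using m_pos by (intro nn_integral_cong) (simp add: ennreal_mult''[symmetric])
  also have "\<dots> = ennreal m * ennreal (1 / m)"
    by (simp add: nn_integral_multc nn_integral_\<mu>_id)
  also have "\<dots> = 1"
    using m_pos by (simp add: ennreal_mult''[symmetric])
  finally show "emeasure size_biased (space size_biased) = 1"
    by (simp add: size_biased_def emeasure_density)
qed

lemma size_biased_pair:
  "size_biased \<Otimes>\<^sub>M \<nu> K = density (\<mu> \<Otimes>\<^sub>M \<nu> K) (\<lambda>p. ennreal (fst p / m))"
proof -
  have "size_biased \<Otimes>\<^sub>M \<nu> K = size_biased \<Otimes>\<^sub>M density (\<nu> K) (\<lambda>_. 1)"
    by (simp add: density_1)
  also have "\<dots> = density (\<mu> \<Otimes>\<^sub>M \<nu> K) (\<lambda>(x, y). ennreal (x / m) * 1)"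
    unfolding size_biased_def by (rule pair_measure_density) (simp_all add: density_1 sigma_finite_\<nu>)
  finally show ?thesis by (simp add: case_prod_beta')
qed

definition log_avg :: "nat \<Rightarrow> real \<Rightarrow> real" where
  "log_avg K t = ln ((1 / real (K + 1)) * t)"

lemma measurable_log_avg[measurable]: "log_avg K \<in> borel_measurable borel"
  unfolding log_avg_def by measurable

definition weighted_log_avg :: "nat \<Rightarrow> real" where
  "weighted_log_avg K = (\<integral>p. fst p * log_avg K (fst p + snd p) \<partial>(\<mu> \<Otimes>\<^sub>M \<nu> K))"

definition expected_log_avg :: "nat \<Rightarrow> real" where
  "expected_log_avg K = (\<integral>x. (\<integral>s. log_avg K (x + s) \<partial>\<nu> K) \<partial>size_biased)"

lemma abs_times_log_avg_le:
  assumes "0 \<le> x" "0 \<le> s"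
  shows "\<bar>x * log_avg K (x + s)\<bar> \<le> \<bar>x * ln x\<bar> + x * ln (real K + 1) + s"
proof (cases "x = 0")
  case True
  then show ?thesis using assms by simp
next
  case False
  then have x: "0 < x" using assms by simp
  have eq: "x * log_avg K (x + s) = x * ln (x + s) - x * ln (real K + 1)"
    using x assms by (simp add: log_avg_def ln_div right_diff_distrib add.commute)
  have "x * ln x \<le> x * ln (x + s)"
    using x assms by (intro mult_left_mono) auto
  moreover have "x * ln (x + s) \<le> x * (ln x + s / x)"
    using x assms ln_le_tangent[of "x + s" x] by (intro mult_left_mono) auto
  then have "x * ln (x + s) \<le> x * ln x + s"
    using x by (simp add: distrib_left)
  moreover have "0 \<le> x * ln (real K + 1)"
    using x by simp
  ultimately show ?thesis
    unfolding eq by arith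
qed

lemma integrable_weighted_log_avg:
  "integrable (\<mu> \<Otimes>\<^sub>M \<nu> K) (\<lambda>p. fst p * log_avg K (fst p + snd p))"
proof (rule Bochner_Integration.integrable_bound)
  interpret \<nu>: prob_space "\<nu> K" by (rule prob_space_\<nu>)
  have "integrable (\<mu> \<Otimes>\<^sub>M \<nu> K) (\<lambda>p. \<bar>fst p * ln (fst p)\<bar>)"
    using integrable_abs[OF integrable_\<mu>_xlnx]
    by (rule \<nu>.integrable_pair_fst_iff[THEN iffD2, rotated]) measurable
  moreover have "integrable (\<mu> \<Otimes>\<^sub>M \<nu> K) (\<lambda>p. fst p * ln (real K + 1))"
    using integrable_mult_left[OF integrable_\<mu>_id]
    by (rule \<nu>.integrable_pair_fst_iff[THEN iffD2, rotated]) measurable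
  moreover have "integrable (\<mu> \<Otimes>\<^sub>M \<nu> K) (\<lambda>p. snd p)"
    using integrable_\<nu>_id
    by (rule integrable_pair_snd_iff[OF prob_space_\<mu> sigma_finite_\<nu>, THEN iffD2, rotated]) measurable
  ultimately show "integrable (\<mu> \<Otimes>\<^sub>M \<nu> K)
      (\<lambda>p. \<bar>fst p * ln (fst p)\<bar> + fst p * ln (real K + 1) + snd p)"
    by (intro Bochner_Integration.integrable_add)
  show "AE p in \<mu> \<Otimes>\<^sub>M \<nu> K. norm (fst p * log_avg K (fst p + snd p))
      \<le> norm (\<bar>fst p * ln (fst p)\<bar> + fst p * ln (real K + 1) + snd p)"
    using AE_pair_nonneg[of K]
  proof eventually_elim
    case (elim p)
    then have "\<bar>fst p * log_avg K (fst p + snd p)\<bar>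
        \<le> \<bar>fst p * ln (fst p)\<bar> + fst p * ln (real K + 1) + snd p"
      by (intro abs_times_log_avg_le) auto
    then show ?case by simp
  qed
qed measurable

lemma expected_log_avg_eq: "expected_log_avg K = weighted_log_avg K / m"
proof -
  interpret size_biased: prob_space size_biased by (rule prob_space_size_biased)
  interpret \<nu>: prob_space "\<nu> K" by (rule prob_space_\<nu>)
  interpret pair_sigma_finite size_biased "\<nu> K" by unfold_locales
  let ?f = "\<lambda>p. log_avg K (fst p + snd p)" and ?g = "\<lambda>p. fst p / m"
  have [measurable]: "?f \<in> borel_measurable (\<mu> \<Otimes>\<^sub>M \<nu> K)"
    by measurable
  have [measurable]: "?g \<in> borel_measurable (\<mu> \<Otimes>\<^sub>M \<nu> K)"
    by measurable
  have nonneg: "AE p in \<mu> \<Otimes>\<^sub>M \<nu> K. 0 \<le> ?g p"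
    using AE_pair_nonneg[of K] by eventually_elim (simp add: less_imp_le[OF m_pos])
  have "integrable (\<mu> \<Otimes>\<^sub>M \<nu> K) (\<lambda>p. ?g p *\<^sub>R ?f p)"
    using integrable_divide_zero[OF integrable_weighted_log_avg, where c=m] by simp
  then have int: "integrable (size_biased \<Otimes>\<^sub>M \<nu> K) ?f"
    unfolding size_biased_pair by (subst integrable_density[OF _ _ nonneg]) simp_all
  have "expected_log_avg K = (\<integral>p. ?f p \<partial>(size_biased \<Otimes>\<^sub>M \<nu> K))"
    unfolding expected_log_avg_def using integral_fst'[OF int] by simp
  also have "\<dots> = (\<integral>p. ?g p *\<^sub>R ?f p \<partial>(\<mu> \<Otimes>\<^sub>M \<nu> K))"
    unfolding size_biased_pair by (rule integral_density[OF _ _ nonneg]) simp_all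
  also have "\<dots> = weighted_log_avg K / m"
    unfolding weighted_log_avg_def by simp
  finally show ?thesis .
qed

lemma integrable_\<nu>_Suc_log_avg: "integrable (\<nu> (Suc K)) (\<lambda>t. t * log_avg K t)"
  and integral_\<nu>_Suc_log_avg: "(\<integral>t. t * log_avg K t \<partial>\<nu> (Suc K)) = real (Suc K) * weighted_log_avg K"
  using integral_\<nu>_Suc_times[OF measurable_log_avg integrable_weighted_log_avg]
  unfolding weighted_log_avg_def by auto

lemma weighted_log_avg_ge: "m * ln m \<le> weighted_log_avg K"
proof -
  interpret \<nu>: prob_space "\<nu> (Suc K)" by (rule prob_space_\<nu>)
  define n where "n = real (Suc K)"
  have n: "0 < n" unfolding n_def by simp
  have tangent: "n * m * ln m + (1 + ln m) * (t - n * m) \<le> t * log_avg K t" if "0 \<le> t" for t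
  proof -
    have "n * m * ln m + (1 + ln m) * (t - n * m) = n * (m * ln m + (1 + ln m) * (t / n - m))"
      using n by (simp add: algebra_simps)
    also have "\<dots> \<le> n * ((t / n) * ln (t / n))"
      using n that m_pos by (intro mult_left_mono xlnx_ge_tangent) auto
    also have "\<dots> = t * log_avg K t" unfolding log_avg_def n_def by simp
    finally show ?thesis .
  qed
  have "n * m * ln m = (\<integral>t. n * m * ln m + (1 + ln m) * (t - n * m) \<partial>\<nu> (Suc K))"
    using integrable_\<nu>_id[of "Suc K"] integral_\<nu>_id[of "Suc K"] unfolding n_def
    by (simp add: \<nu>.prob_space)
  also have "\<dots> \<le> (\<integral>t. t * log_avg K t \<partial>\<nu> (Suc K))"
  proof (rule integral_mono_AE)
    show "AE t in \<nu> (Suc K). n * m * ln m + (1 + ln m) * (t - n * m) \<le> t * log_avg K t"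
      using AE_\<nu>_nonneg by eventually_elim (rule tangent)
  qed (use integrable_\<nu>_id integrable_\<nu>_Suc_log_avg in auto)
  also have "\<dots> = n * weighted_log_avg K"
    unfolding integral_\<nu>_Suc_log_avg n_def ..
  finally show ?thesis using n by (simp add: mult.assoc)
qed

text \<open>
  The tangent of \<open>x ln x\<close> at the mean of \<open>K + 2\<close> weights, evaluated at the mean of the
  last \<open>K + 1\<close> of them.
\<close>

lemma xlnx_tangent_leave_one_out:
  fixes K :: nat and x s :: real
  assumes "0 \<le> x" "0 \<le> s"
  defines "n \<equiv> real (Suc K)"
  shows "(x + s) * log_avg (Suc K) (x + s) / (n + 1)
      + (s - n * x) * (1 + log_avg (Suc K) (x + s)) / (n * (n + 1)) \<le> s * log_avg K s / n"
proof -
  define a where "a = s / n"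
  define b where "b = (x + s) / (n + 1)"
  have n: "0 < n" by (simp add: n_def)
  have "b * ln b + (1 + ln b) * (a - b) \<le> a * ln a"
    using assms n by (intro xlnx_ge_tangent) (auto simp: a_def b_def)
  moreover have "log_avg K s = ln a" "log_avg (Suc K) (x + s) = ln b"
    by (simp_all add: log_avg_def a_def b_def n_def)
  moreover have "(x + s) * ln b / (n + 1) = b * ln b" "s * ln a / n = a * ln a"
    by (simp_all add: a_def b_def)
  moreover have "(s - n * x) / (n * (n + 1)) = a - b"
    using n by (simp add: a_def b_def field_simps)
  then have "(s - n * x) * (1 + ln b) / (n * (n + 1)) = (1 + ln b) * (a - b)"
    by (metis times_divide_eq_left mult.commute)
  ultimately show ?thesis
    by simp
qed

lemma integral_pair_centered_times:
  assumes [measurable]: "g \<in> borel_measurable borel"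
    and int: "integrable (\<mu> \<Otimes>\<^sub>M \<nu> K) (\<lambda>p. fst p * g (fst p + snd p))"
  shows "integrable (\<mu> \<Otimes>\<^sub>M \<nu> K) (\<lambda>p. (snd p - real K * fst p) * g (fst p + snd p))"
    and "(\<integral>p. (snd p - real K * fst p) * g (fst p + snd p) \<partial>(\<mu> \<Otimes>\<^sub>M \<nu> K)) = 0"
proof -
  have eq: "(\<lambda>p. (snd p - real K * fst p) * g (fst p + snd p))
      = (\<lambda>p. snd p * g (fst p + snd p) - real K * (fst p * g (fst p + snd p)))"
    by (auto simp: algebra_simps)
  show "integrable (\<mu> \<Otimes>\<^sub>M \<nu> K) (\<lambda>p. (snd p - real K * fst p) * g (fst p + snd p))"
    unfolding eq using integral_pair_snd_times(1)[OF assms] int by simp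
  show "(\<integral>p. (snd p - real K * fst p) * g (fst p + snd p) \<partial>(\<mu> \<Otimes>\<^sub>M \<nu> K)) = 0"
    unfolding eq using integral_pair_snd_times[OF assms] int by simp
qed

lemma integrable_\<nu>_Suc_iff:
  fixes g :: "real \<Rightarrow> real"
  assumes [measurable]: "g \<in> borel_measurable borel"
  shows "integrable (\<nu> (Suc K)) g \<longleftrightarrow> integrable (\<mu> \<Otimes>\<^sub>M \<nu> K) (\<lambda>p. g (fst p + snd p))"
  unfolding \<nu>_Suc by (subst integrable_distr_eq) (auto simp: case_prod_beta')

lemma integral_\<nu>_Suc:
  fixes g :: "real \<Rightarrow> real"
  assumes [measurable]: "g \<in> borel_measurable borel"
  shows "(\<integral>t. g t \<partial>\<nu> (Suc K)) = (\<integral>p. g (fst p + snd p) \<partial>(\<mu> \<Otimes>\<^sub>M \<nu> K))"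
  unfolding \<nu>_Suc by (subst integral_distr) (auto simp: case_prod_beta')

lemma weighted_log_avg_Suc_le: "weighted_log_avg (Suc K) \<le> weighted_log_avg K"
proof -
  define n where "n = real (Suc K)"
  let ?P = "\<mu> \<Otimes>\<^sub>M \<nu> (Suc K)"
  define all where "all p = (fst p + snd p) * log_avg (Suc K) (fst p + snd p) / (n + 1)"
    for p :: "real \<times> real"
  define cross where "cross p = (snd p - n * fst p) * (1 + log_avg (Suc K) (fst p + snd p)) / (n * (n + 1))"
    for p :: "real \<times> real"
  define others where "others p = snd p * log_avg K (snd p) / n" for p :: "real \<times> real"
  have int_fst: "integrable ?P (\<lambda>p. fst p * (1 + log_avg (Suc K) (fst p + snd p)))"
    using integrable_weighted_log_avg[of "Suc K"] integrable_\<mu>_id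
      prob_space.integrable_pair_fst_iff[OF prob_space_\<nu>, of "\<lambda>x. x" \<mu> "Suc K"]
    by (simp add: distrib_left)
  have "integrable ?P (\<lambda>p. (fst p + snd p) * log_avg (Suc K) (fst p + snd p))"
    using integrable_\<nu>_Suc_log_avg[of "Suc K"] by (simp add: integrable_\<nu>_Suc_iff)
  then have int_all: "integrable ?P all"
    unfolding all_def by simp
  have "(\<integral>p. all p \<partial>?P) = weighted_log_avg (Suc K)"
    using integral_\<nu>_Suc_log_avg[of "Suc K"] unfolding all_def n_def
    by (simp add: integral_\<nu>_Suc)
  moreover have int_others: "integrable ?P others" and "(\<integral>p. others p \<partial>?P) = weighted_log_avg K"
    using integrable_\<nu>_Suc_log_avg[of K] integral_\<nu>_Suc_log_avg[of K]
      integral_pair_snd[OF prob_space_\<mu> sigma_finite_\<nu>, of "\<lambda>t. t * log_avg K t" "Suc K"]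
    unfolding others_def n_def by simp_all
  moreover have int_cross: "integrable ?P cross" and "(\<integral>p. cross p \<partial>?P) = 0"
    using integral_pair_centered_times[OF _ int_fst] unfolding cross_def n_def by simp_all
  moreover have "(\<integral>p. all p + cross p \<partial>?P) \<le> (\<integral>p. others p \<partial>?P)"
  proof (rule integral_mono_AE)
    show "AE p in ?P. all p + cross p \<le> others p"
      using AE_pair_nonneg[of "Suc K"] unfolding all_def cross_def others_def n_def
      by eventually_elim (rule xlnx_tangent_leave_one_out; simp)
  qed (use int_all int_cross int_others in auto)
  ultimately show ?thesis
    using int_all int_cross by simp
qed

definition log_avg_at_mean :: "nat \<Rightarrow> real \<Rightarrow> real" where
  "log_avg_at_mean K x = x * log_avg K (x + real K * m)"

lemma measurable_log_avg_at_mean[measurable]: "log_avg_at_mean K \<in> borel_measurable borel"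
  unfolding log_avg_at_mean_def by measurable

lemma abs_log_avg_at_mean_le:
  assumes "0 \<le> x"
  shows "\<bar>log_avg_at_mean K x\<bar> \<le> \<bar>x * ln x\<bar> + x * \<bar>ln m\<bar>"
proof (cases "x = 0")
  case True
  then show ?thesis by (simp add: log_avg_at_mean_def)
next
  case False
  then have x: "0 < x" using assms by simp
  define c where "c = (x + real K * m) / real (K + 1)"
  have "real K * min x m \<le> real K * x" "real K * min x m \<le> real K * m"
    by (intro mult_left_mono; simp)+
  then have "real (K + 1) * min x m \<le> x + real K * m"
    by (simp add: algebra_simps)
  then have c1: "min x m \<le> c" unfolding c_def by (simp add: pos_le_divide_eq mult.commute)
  have "real K * x \<le> real K * max x m" "real K * m \<le> real K * max x m"
    by (intro mult_left_mono; simp)+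
  then have "x + real K * m \<le> real (K + 1) * max x m"
    by (simp add: algebra_simps)
  then have c2: "c \<le> max x m" unfolding c_def by (simp add: pos_divide_le_eq mult.commute)
  have "x * \<bar>ln c\<bar> \<le> x * (\<bar>ln x\<bar> + \<bar>ln m\<bar>)"
    using abs_ln_between_le[OF x m_pos c1 c2] x by (intro mult_left_mono) auto
  moreover have "log_avg K (x + real K * m) = ln c"
    by (simp add: log_avg_def c_def)
  ultimately show ?thesis
    using x by (simp add: log_avg_at_mean_def abs_mult algebra_simps)
qed

lemma log_avg_at_mean_tendsto: "(\<lambda>K. log_avg_at_mean K x) \<longlonglongrightarrow> x * ln m"
proof -
  have eq: "(1 / real (K + 1)) * (x + real K * m) = m + (x - m) * inverse (real (Suc K))" for K
    by (simp add: field_simps)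
  have "(\<lambda>K. m + (x - m) * inverse (real (Suc K))) \<longlonglongrightarrow> m + (x - m) * 0"
    by (intro tendsto_intros LIMSEQ_inverse_real_of_nat)
  then have "(\<lambda>K. (1 / real (K + 1)) * (x + real K * m)) \<longlonglongrightarrow> m"
    unfolding eq by simp
  then have "(\<lambda>K. x * ln ((1 / real (K + 1)) * (x + real K * m))) \<longlonglongrightarrow> x * ln m"
    using m_pos by (intro tendsto_intros) auto
  then show ?thesis
    unfolding log_avg_at_mean_def log_avg_def .
qed

lemma integrable_log_avg_at_mean: "integrable \<mu> (log_avg_at_mean K)"
  and integral_log_avg_at_mean_tendsto: "(\<lambda>K. \<integral>x. log_avg_at_mean K x \<partial>\<mu>) \<longlonglongrightarrow> m * ln m"
proof -
  have bound: "integrable \<mu> (\<lambda>x. \<bar>x * ln x\<bar> + x * \<bar>ln m\<bar>)"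
    using integrable_\<mu>_xlnx integrable_\<mu>_id
    by (intro Bochner_Integration.integrable_add integrable_abs integrable_mult_left)
  have lim: "AE x in \<mu>. (\<lambda>K. log_avg_at_mean K x) \<longlonglongrightarrow> x * ln m"
    by (simp add: log_avg_at_mean_tendsto)
  have le: "AE x in \<mu>. norm (log_avg_at_mean K x) \<le> \<bar>x * ln x\<bar> + x * \<bar>ln m\<bar>" for K
    using AE_\<mu>_nonneg by eventually_elim (simp add: abs_log_avg_at_mean_le)
  show "integrable \<mu> (log_avg_at_mean K)"
    by (rule integrable_dominated_convergence2[OF _ _ bound lim le]) simp_all
  have "(\<lambda>K. \<integral>x. log_avg_at_mean K x \<partial>\<mu>) \<longlonglongrightarrow> (\<integral>x. x * ln m \<partial>\<mu>)"
    by (rule integral_dominated_convergence[OF _ _ bound lim le]) simp_all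
  then show "(\<lambda>K. \<integral>x. log_avg_at_mean K x \<partial>\<mu>) \<longlonglongrightarrow> m * ln m"
    by (simp add: integral_\<mu>_id)
qed

text \<open>The tangent of \<open>ln\<close> at the point where the other \<open>K\<close> weights are replaced by their mean.\<close>

lemma times_log_avg_le_at_mean:
  assumes "0 \<le> x" "0 \<le> s"
  shows "x * log_avg K (x + s) \<le> log_avg_at_mean K x + x * ((s - real K * m) / (x + real K * m))"
proof (cases "x = 0")
  case True
  then show ?thesis by (simp add: log_avg_at_mean_def)
next
  case False
  then have x: "0 < x" using assms by simp
  define c where "c = (x + real K * m) / real (K + 1)"
  have log_avg_eq: "log_avg K t = ln (t / real (K + 1))" for t
    unfolding log_avg_def by simp
  have Km: "0 \<le> real K * m" using m_pos by simp
  have "(x + s) / real (K + 1) - c = (s - real K * m) / real (K + 1)"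
    unfolding c_def by (simp add: diff_divide_distrib[symmetric] algebra_simps)
  then have slope: "((x + s) / real (K + 1) - c) / c = (s - real K * m) / (x + real K * m)"
    using x Km by (simp add: c_def del: of_nat_Suc)
  have "ln ((x + s) / real (K + 1)) \<le> ln c + (s - real K * m) / (x + real K * m)"
    using ln_le_tangent[of "(x + s) / real (K + 1)" c] x assms Km unfolding slope
    by (simp add: c_def add_pos_nonneg)
  then have "x * ln ((x + s) / real (K + 1)) \<le> x * (ln c + (s - real K * m) / (x + real K * m))"
    using x by (intro mult_left_mono) auto
  then show ?thesis
    unfolding log_avg_at_mean_def log_avg_eq c_def by (simp only: distrib_left)
qed

lemma integral_pair_centered_snd:
  "integrable (\<mu> \<Otimes>\<^sub>M \<nu> K) (\<lambda>p. fst p * ((snd p - real K * m) / (fst p + real K * m)))"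
  "(\<integral>p. fst p * ((snd p - real K * m) / (fst p + real K * m)) \<partial>(\<mu> \<Otimes>\<^sub>M \<nu> K)) = 0"
proof -
  interpret \<mu>: prob_space \<mu> by (rule prob_space_\<mu>)
  interpret \<nu>: prob_space "\<nu> K" by (rule prob_space_\<nu>)
  interpret pair_prob_space \<mu> "\<nu> K" by unfold_locales
  let ?Z = "\<lambda>p. fst p * ((snd p - real K * m) / (fst p + real K * m))"
  have "integrable (\<mu> \<Otimes>\<^sub>M \<nu> K) (\<lambda>p. snd p)"
    using integrable_\<nu>_id
    by (rule integrable_pair_snd_iff[OF prob_space_\<mu> sigma_finite_\<nu>, THEN iffD2, rotated]) measurable
  then have int_bound: "integrable (\<mu> \<Otimes>\<^sub>M \<nu> K) (\<lambda>p. \<bar>snd p\<bar> + real K * m)"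
    by (intro Bochner_Integration.integrable_add integrable_abs integrable_const)
  have le_bound: "AE p in \<mu> \<Otimes>\<^sub>M \<nu> K. norm (?Z p) \<le> norm (\<bar>snd p\<bar> + real K * m)"
    using AE_pair_nonneg[of K]
  proof eventually_elim
    case (elim p)
    then have "\<bar>?Z p\<bar> \<le> \<bar>snd p\<bar> + real K * m"
      using m_pos by (intro abs_times_centered_le) simp_all
    then show ?case
      unfolding real_norm_def by (rule order_trans[OF _ abs_ge_self])
  qed
  show int: "integrable (\<mu> \<Otimes>\<^sub>M \<nu> K) ?Z"
    by (rule Bochner_Integration.integrable_bound[OF int_bound _ le_bound]) measurable
  have "(\<integral>s. s - real K * m \<partial>\<nu> K) = 0"
    using integrable_\<nu>_id integral_\<nu>_id
    by (simp add: Bochner_Integration.integral_diff \<nu>.prob_space)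
  then show "(\<integral>p. ?Z p \<partial>(\<mu> \<Otimes>\<^sub>M \<nu> K)) = 0"
    using integral_fst'[OF int] by simp
qed

lemma weighted_log_avg_le_at_mean: "weighted_log_avg K \<le> (\<integral>x. log_avg_at_mean K x \<partial>\<mu>)"
proof -
  let ?P = "\<mu> \<Otimes>\<^sub>M \<nu> K" and ?Z = "\<lambda>p. fst p * ((snd p - real K * m) / (fst p + real K * m))"
  have int: "integrable ?P (\<lambda>p. log_avg_at_mean K (fst p))"
    using integrable_log_avg_at_mean
    by (rule prob_space.integrable_pair_fst_iff[OF prob_space_\<nu>, THEN iffD2, rotated]) measurable
  have "weighted_log_avg K \<le> (\<integral>p. log_avg_at_mean K (fst p) + ?Z p \<partial>?P)"
    unfolding weighted_log_avg_def
  proof (rule integral_mono_AE[OF integrable_weighted_log_avg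
        Bochner_Integration.integrable_add[OF int integral_pair_centered_snd(1)]])
    show "AE p in ?P. fst p * log_avg K (fst p + snd p) \<le> log_avg_at_mean K (fst p) + ?Z p"
      using AE_pair_nonneg[of K] by eventually_elim (intro times_log_avg_le_at_mean; simp)
  qed
  also have "\<dots> = (\<integral>p. log_avg_at_mean K (fst p) \<partial>?P)"
    unfolding Bochner_Integration.integral_add[OF int integral_pair_centered_snd(1)]
      integral_pair_centered_snd(2) by simp
  also have "\<dots> = (\<integral>x. log_avg_at_mean K x \<partial>\<mu>)"
    by (rule prob_space.integral_pair_fst(2)[OF prob_space_\<nu>]) measurable
  finally show ?thesis .
qed

lemma ln_le_expected_log_avg: "ln m \<le> expected_log_avg K"
  using weighted_log_avg_ge[of K] m_pos
  by (simp add: expected_log_avg_eq pos_le_divide_eq mult.commute)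

lemma expected_log_avg_Suc_le: "expected_log_avg (Suc K) \<le> expected_log_avg K"
  using weighted_log_avg_Suc_le[of K] m_pos
  by (simp add: expected_log_avg_eq divide_right_mono)

lemma expected_log_avg_tendsto: "expected_log_avg \<longlonglongrightarrow> ln m"
proof (rule tendsto_sandwich[OF _ _ tendsto_const])
  show "\<forall>\<^sub>F K in sequentially. ln m \<le> expected_log_avg K"
    by (simp add: ln_le_expected_log_avg)
  show "\<forall>\<^sub>F K in sequentially. expected_log_avg K \<le> (\<integral>x. log_avg_at_mean K x \<partial>\<mu>) / m"
    using weighted_log_avg_le_at_mean m_pos
    by (simp add: expected_log_avg_eq divide_right_mono)
  have "(\<lambda>K. (\<integral>x. log_avg_at_mean K x \<partial>\<mu>) / m) \<longlonglongrightarrow> m * ln m / m"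
    using m_pos by (intro tendsto_divide integral_log_avg_at_mean_tendsto) auto
  then show "(\<lambda>K. (\<integral>x. log_avg_at_mean K x \<partial>\<mu>) / m) \<longlonglongrightarrow> ln m"
    using m_pos by simp
qed

end

section \<open>Importance sampling with densities\<close>

locale importance_densities =
  fixes M :: "'p measure" and q :: "'z \<Rightarrow> 'p \<Rightarrow> real" and \<tau> :: "'p \<Rightarrow> real" and z :: 'z
  assumes q_nonneg: "\<And>\<psi>. \<psi> \<in> space M \<Longrightarrow> 0 \<le> q z \<psi>"
    and integrable_q: "integrable M (q z)"
    and marg_pos: "0 < marg M q z"
    and measurable_\<tau>[measurable]: "\<tau> \<in> borel_measurable M"
    and \<tau>_nonneg: "\<And>\<psi>. \<psi> \<in> space M \<Longrightarrow> 0 \<le> \<tau> \<psi>"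
    and integrable_\<tau>: "integrable M \<tau>"
    and integral_\<tau>: "(\<integral>\<psi>. \<tau> \<psi> \<partial>M) = 1"
    and support: "\<And>\<psi>. \<psi> \<in> space M \<Longrightarrow> \<tau> \<psi> = 0 \<Longrightarrow> q z \<psi> = 0"
    and integrable_ln_weight:
      "integrable (density M (\<lambda>\<psi>. ennreal (cond M q z \<psi>))) (\<lambda>\<psi>. ln (q z \<psi> / \<tau> \<psi>))"
begin

definition weight :: "'p \<Rightarrow> real" where
  "weight \<psi> = q z \<psi> / \<tau> \<psi>"

lemma measurable_q[measurable]: "q z \<in> borel_measurable M"
  using integrable_q by auto

lemma measurable_weight[measurable]: "weight \<in> borel_measurable M"
  unfolding weight_def by measurable

lemma weight_nonneg: "\<psi> \<in> space M \<Longrightarrow> 0 \<le> weight \<psi>"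
  unfolding weight_def using q_nonneg \<tau>_nonneg by simp

text \<open>Where \<open>\<tau> \<psi> = 0\<close> the weight is the junk value \<open>q z \<psi> / 0 = 0\<close>; this is harmless by \<open>support\<close>.\<close>

lemma \<tau>_times_weight: "\<psi> \<in> space M \<Longrightarrow> \<tau> \<psi> * weight \<psi> = q z \<psi>"
  unfolding weight_def using support by (cases "\<tau> \<psi> = 0") auto

lemma measurable_cond[measurable]: "cond M q z \<in> borel_measurable M"
  unfolding cond_def by measurable

lemma cond_eq: "\<psi> \<in> space M \<Longrightarrow> cond M q z \<psi> = \<tau> \<psi> * (weight \<psi> / marg M q z)"
  unfolding cond_def by (simp add: \<tau>_times_weight[symmetric])

lemma prob_space_density_\<tau>: "prob_space (density M \<tau>)"
proof (rule prob_spaceI)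
  have "(\<integral>\<^sup>+\<psi>. ennreal (\<tau> \<psi>) \<partial>M) = ennreal (\<integral>\<psi>. \<tau> \<psi> \<partial>M)"
    by (rule nn_integral_eq_integral[OF integrable_\<tau>]) (simp add: \<tau>_nonneg)
  then show "emeasure (density M \<tau>) (space (density M \<tau>)) = 1"
    by (simp add: emeasure_density integral_\<tau>)
qed

lemma nn_integral_weight: "(\<integral>\<^sup>+\<psi>. ennreal (weight \<psi>) \<partial>density M \<tau>) = ennreal (marg M q z)"
proof -
  have "(\<integral>\<^sup>+\<psi>. ennreal (weight \<psi>) \<partial>density M \<tau>) = (\<integral>\<^sup>+\<psi>. ennreal (\<tau> \<psi>) * ennreal (weight \<psi>) \<partial>M)"
    by (rule nn_integral_density) simp_all
  also have "\<dots> = (\<integral>\<^sup>+\<psi>. ennreal (q z \<psi>) \<partial>M)"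
    by (rule nn_integral_cong)
      (simp add: ennreal_mult[symmetric] \<tau>_nonneg weight_nonneg \<tau>_times_weight)
  also have "\<dots> = ennreal (marg M q z)"
    unfolding marg_def by (rule nn_integral_eq_integral[OF integrable_q]) (simp add: q_nonneg)
  finally show ?thesis .
qed

lemma integrable_weight_ln_weight: "integrable (density M \<tau>) (\<lambda>\<psi>. weight \<psi> * ln (weight \<psi>))"
proof -
  have cond_nonneg: "AE \<psi> in M. 0 \<le> cond M q z \<psi>"
    using marg_pos by (intro AE_I2) (simp add: cond_eq \<tau>_nonneg weight_nonneg)
  have "integrable M (\<lambda>\<psi>. cond M q z \<psi> * ln (weight \<psi>))"
    using integrable_ln_weight unfolding weight_def[symmetric]
    by (subst (asm) integrable_density[OF _ _ cond_nonneg]) (simp_all add: cond_def)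
  then have "integrable M (\<lambda>\<psi>. marg M q z * (cond M q z \<psi> * ln (weight \<psi>)))"
    by (rule integrable_mult_right)
  then have "integrable M (\<lambda>\<psi>. \<tau> \<psi> * (weight \<psi> * ln (weight \<psi>)))"
    by (rule Bochner_Integration.integrable_cong[OF refl, THEN iffD1, rotated])
      (use marg_pos in \<open>simp add: cond_eq\<close>)
  then show ?thesis
    by (subst integrable_density) (simp_all add: \<tau>_nonneg)
qed

sublocale importance_weights "density M \<tau>" weight "marg M q z"
  by (rule importance_weights.intro[OF prob_space_density_\<tau> _ _ nn_integral_weight marg_pos
        integrable_weight_ln_weight]) (measurable, simp add: weight_nonneg)

lemma distr_cond_weight:
  "distr (density M (\<lambda>\<psi>. ennreal (cond M q z \<psi>))) borel weight = size_biased"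
proof -
  have "size_biased = distr (density (density M \<tau>) (\<lambda>\<psi>. ennreal (weight \<psi> / marg M q z))) borel weight"
    unfolding size_biased_def \<mu>_def by (rule density_distr) simp_all
  also have "density (density M \<tau>) (\<lambda>\<psi>. ennreal (weight \<psi> / marg M q z))
      = density M (\<lambda>\<psi>. ennreal (cond M q z \<psi>))"
    by (subst density_density_eq) (auto intro!: density_cong AE_I2 simp: cond_eq
        ennreal_mult[symmetric] \<tau>_nonneg weight_nonneg less_imp_le[OF marg_pos])
  finally show ?thesis ..
qed

lemma iw_log_eq: "iw_log q \<tau> z K \<psi>0 \<psi>s = log_avg K (weight \<psi>0 + weight_sum K \<psi>s)"
proof -
  have "(\<Sum>k\<in>{0..K}. let \<psi> = if k = 0 then \<psi>0 else \<psi>s k in q z \<psi> / \<tau> \<psi>)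
      = weight \<psi>0 + (\<Sum>k\<in>{Suc 0..K}. let \<psi> = if k = 0 then \<psi>0 else \<psi>s k in q z \<psi> / \<tau> \<psi>)"
    by (subst sum.atLeast_Suc_atMost) (auto simp: weight_def Let_def)
  also have "(\<Sum>k\<in>{Suc 0..K}. let \<psi> = if k = 0 then \<psi>0 else \<psi>s k in q z \<psi> / \<tau> \<psi>)
      = weight_sum K \<psi>s"
    unfolding weight_sum_def weight_def by (intro sum.cong) (auto simp: Let_def)
  finally show ?thesis
    unfolding iw_log_def log_avg_def by simp
qed

lemma U_eq_expected_log_avg: "U M q \<tau> z K = expected_log_avg K"
proof -
  interpret \<nu>: sigma_finite_measure "\<nu> K" by (rule sigma_finite_\<nu>)
  let ?Q = "density M (\<lambda>\<psi>. ennreal (cond M q z \<psi>))"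
  have "U M q \<tau> z K
      = (\<integral>\<psi>0. (\<integral>\<psi>s. log_avg K (weight \<psi>0 + weight_sum K \<psi>s) \<partial>PiM {1..K} (\<lambda>_. density M \<tau>)) \<partial>?Q)"
    unfolding U_def tau_prod_def iw_log_eq ..
  also have "\<dots> = (\<integral>\<psi>0. (\<integral>s. log_avg K (weight \<psi>0 + s) \<partial>\<nu> K) \<partial>?Q)"
    unfolding \<nu>_def by (intro Bochner_Integration.integral_cong refl integral_distr[symmetric]) measurable
  also have "\<dots> = (\<integral>x. (\<integral>s. log_avg K (x + s) \<partial>\<nu> K) \<partial>distr ?Q borel weight)"
    by (rule integral_distr[symmetric]) measurable
  also have "\<dots> = expected_log_avg K"
    unfolding distr_cond_weight expected_log_avg_def ..
  finally show ?thesis .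
qed

end

theorem theorem1:
  fixes N :: "'z measure" and M :: "'p measure"
    and q :: "'z \<Rightarrow> 'p \<Rightarrow> real" and \<tau> :: "'p \<Rightarrow> real" and z :: 'z
  assumes "sigma_finite_measure N" and "sigma_finite_measure M"
    and q_meas: "(\<lambda>x. q (fst x) (snd x)) \<in> borel_measurable (N \<Otimes>\<^sub>M M)"
    and q_nonneg: "\<And>z \<psi>. z \<in> space N \<Longrightarrow> \<psi> \<in> space M \<Longrightarrow> 0 \<le> q z \<psi>"
    and q_int: "integrable (N \<Otimes>\<^sub>M M) (\<lambda>x. q (fst x) (snd x))"
    and q_norm: "(\<integral>x. q (fst x) (snd x) \<partial>(N \<Otimes>\<^sub>M M)) = 1"
    and z: "z \<in> space N"
    and qz_int: "integrable M (q z)"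
    and qz_pos: "marg M q z > 0"
    and tau_meas: "\<tau> \<in> borel_measurable M"
    and tau_nonneg: "\<And>\<psi>. \<psi> \<in> space M \<Longrightarrow> 0 \<le> \<tau> \<psi>"
    and tau_int: "integrable M \<tau>"
    and tau_norm: "(\<integral>\<psi>. \<tau> \<psi> \<partial>M) = 1"
    and support: "\<And>\<psi>. \<psi> \<in> space M \<Longrightarrow> \<tau> \<psi> = 0 \<Longrightarrow> q z \<psi> = 0"
    and U_finite: "\<And>K. integrable
        (density M (\<lambda>\<psi>. ennreal (cond M q z \<psi>)) \<Otimes>\<^sub>M tau_prod M \<tau> K)
        (\<lambda>x. iw_log q \<tau> z K (fst x) (snd x))"
  shows "(\<forall>K. U M q \<tau> z K \<ge> ln (marg M q z))
       \<and> (\<forall>K. U M q \<tau> z K \<ge> U M q \<tau> z (Suc K))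
       \<and> (\<lambda>K. U M q \<tau> z K) \<longlonglongrightarrow> ln (marg M q z)"
proof -
  have [measurable]: "q z \<in> borel_measurable M" "\<tau> \<in> borel_measurable M"
    using qz_int tau_meas by auto
  \<comment> \<open>Only the case \<open>K = 0\<close> of \<open>U_finite\<close> is needed: the integrability of \<open>ln w\<close> under \<open>q(\<cdot>|z)\<close>.\<close>
  have "integrable (density M (\<lambda>\<psi>. ennreal (cond M q z \<psi>)) \<Otimes>\<^sub>M tau_prod M \<tau> 0)
      (\<lambda>x. ln (q z (fst x) / \<tau> (fst x)))"
    using U_finite[of 0] by (simp add: iw_log_def Let_def)
  then have "integrable (density M (\<lambda>\<psi>. ennreal (cond M q z \<psi>))) (\<lambda>\<psi>. ln (q z \<psi> / \<tau> \<psi>))"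
    unfolding tau_prod_def
    by (subst (asm) prob_space.integrable_pair_fst_iff[OF prob_space_PiM]) simp_all
  then interpret importance_densities M q \<tau> z
    using assms by unfold_locales simp_all
  show ?thesis
    using ln_le_expected_log_avg expected_log_avg_Suc_le expected_log_avg_tendsto
    by (simp add: U_eq_expected_log_avg)
qed

end
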